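(* Let $(X,d_X)$ and $(\Lambda,d_\Lambda)$ be complete metric spaces and, for each $\lambda\in\Lambda$, let $S_\lambda(\cdot,\cdot)$ be a process on $X$. Suppose: (L1) for every $\lambda\in\Lambda$, $S_\lambda(\cdot,\cdot)$ has a pullback attractor $\mathscr A_\lambda(\cdot)=\{\mathscr A_\lambda(t):t\in\mathbb R\}$; and that one of the following two sets of hypotheses holds: (i) there is a compact set $D\subseteq X$ with $\mathscr A_\lambda(t)\subseteq D$ for every $\lambda\in\Lambda$ and every $t\in\mathbb R$, and for every $s\in\mathbb R$ and $t\ge s$ the map $\lambda\mapsto S_\lambda(t,s)x$ is continuous, uniformly for $x$ in compact subsets of $X$; or (ii) there is a bounded set $D\subseteq X$ with $\mathscr A_\lambda(t)\subseteq D$ for every $\lambda\in\Lambda$ and every $t\in\mathbb R$; for every $s\in\mathbb R$ and $t\ge s$ the map $\lambda\mapsto S_\lambda(t,s)x$ is continuous, uniformly for $x$ in bounded subsets of $X$; and for any $\lambda_0\in\Lambda$ and $t\in\mathbb R$ there exists $\delta>0$ such that $\overline{\bigcup_{\lambda\in B_\Lambda(\lambda_0,\delta)}\mathscr A_\lambda(t)}$ is compact, where $B_\Lambda(\lambda_0,\delta)=\{\lambda\in\Lambda: d_\Lambda(\lambda,\lambda_0)<\delta\}$. Then there exists a residual set $\Lambda_*\subseteq\Lambda$ such that for every $t\in\mathbb R$ the map $\lambda\mapsto\mathscr A_\lambda(t)$ (into the space of nonempty closed bounded subsets of $X$ with the Hausdorff metric) is continuous at each $\lambda\in\Lambda_*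$.
   Context: A process on a complete metric space $(X,d_X)$ is a two-parameter family of maps $S(t,s):X\to X$, $s\in\mathbb R$, $t\ge s$, such that $S(t,t)=\mathrm{id}$, $S(t,\tau)S(\tau,s)=S(t,s)$ for all $t\ge\tau\ge s$, and $S(t,s)x$ is continuous in $(x,t,s)$. For subsets $A,C$ of a metric space $Y$, the Hausdorff semi-distance is $\rho_Y(A,C)=\sup_{a\in A}\inf_{c\in C}d_Y(a,c)$ and the Hausdorff distance is $\Delta_Y(A,C)=\max(\rho_Y(A,C),\rho_Y(C,A))$; $CB(Y)$ denotes the set of nonempty closed bounded subsets of $Y$ with metric $\Delta_Y$. A family of compact sets $\mathscr A(\cdot)=\{\mathscr A(t):t\in\mathbb R\}$ is the pullback attractor of the process $S$ if (A1) $S(t,s)\mathscr A(s)=\mathscr A(t)$ for all $t\ge s$; (A2) for every bounded $B\subseteq X$ and $t\in\mathbb R$, $\rho_X(S(t,s)B,\mathscr A(t))\to0$ as $s\to-\infty$; (A3) if $C(\cdot)$ is any other family of compact sets satisfying (A1) and (A2) then $\mathscr A(t)\subseteq C(t)$ for all $t$. A subset of $\Lambda$ is residual if its complement is a countable union of nowhere dense sets. *)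

theory Defs
  imports "HOL-Analysis.Analysis" "HOL-Library.Extended_Real"
begin

text \<open>Hausdorff semi-distance, with values in the extended reals
  (so that e.g. the semi-distance to the empty set is +infinity; the
  semi-distance from the empty set is 0 by convention).\<close>
definition hsemidist :: "'a::metric_space set \<Rightarrow> 'a set \<Rightarrow> ereal" where
  "hsemidist A C = Sup (insert 0 ((\<lambda>a. Inf ((\<lambda>c. ereal (dist a c)) ` C)) ` A))"

definition hausdist :: "'a::metric_space set \<Rightarrow> 'a set \<Rightarrow> ereal" where
  "hausdist A C = max (hsemidist A C) (hsemidist C A)"

definition is_process :: "(real \<Rightarrow> real \<Rightarrow> 'a::metric_space \<Rightarrow> 'a) \<Rightarrow> bool" where
  "is_process S \<longleftrightarrow>
     (\<forall>t. S t t = id) \<and>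
     (\<forall>t \<tau> s. s \<le> \<tau> \<and> \<tau> \<le> t \<longrightarrow> S t \<tau> \<circ> S \<tau> s = S t s) \<and>
     continuous_on {(x, t, s). s \<le> t} (\<lambda>(x, t, s). S t s x)"

definition pullback_attractor ::
  "(real \<Rightarrow> real \<Rightarrow> 'a::metric_space \<Rightarrow> 'a) \<Rightarrow> (real \<Rightarrow> 'a set) \<Rightarrow> bool" where
  "pullback_attractor S A \<longleftrightarrow>
     (\<forall>t. compact (A t)) \<and>
     (\<forall>t s. s \<le> t \<longrightarrow> S t s ` A s = A t) \<and>
     (\<forall>B t. bounded B \<longrightarrow> ((\<lambda>s. hsemidist (S t s ` B) (A t)) \<longlongrightarrow> 0) at_bot) \<and>
     (\<forall>C. (\<forall>t. compact (C t)) \<and>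
          (\<forall>t s. s \<le> t \<longrightarrow> S t s ` C s = C t) \<and>
          (\<forall>B t. bounded B \<longrightarrow> ((\<lambda>s. hsemidist (S t s ` B) (C t)) \<longlongrightarrow> 0) at_bot)
          \<longrightarrow> (\<forall>t. A t \<subseteq> C t))"

definition nowhere_dense :: "'a::topological_space set \<Rightarrow> bool" where
  "nowhere_dense N \<longleftrightarrow> interior (closure N) = {}"

definition residual :: "'a::topological_space set \<Rightarrow> bool" where
  "residual L \<longleftrightarrow> (\<exists>F. countable F \<and> (\<forall>N\<in>F. nowhere_dense N) \<and> - L = \<Union>F)"

end

theory Submission
  imports Defs
begin

text \<open>For each integer time \<open>z\<close>, the attractor \<open>\<A>\<^sub>\<lambda>(z)\<close> is the Hausdorff limit of
  \<open>S\<^sub>\<lambda>(z, z - n) D\<close> as \<open>n \<rightarrow> \<infinity>\<close>, and each of these sets depends continuously on \<open>\<lambda>\<close>.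
  A pointwise limit of continuous maps into a metric space is continuous on a residual set
  (Baire), and countably many integer times still leave a residual set. Continuity at an
  arbitrary time \<open>t\<close> then follows from continuity at \<open>\<lfloor>t\<rfloor>\<close> by pushing the attractor forward
  with \<open>S\<^sub>\<lambda>(t, \<lfloor>t\<rfloor>)\<close>, which is uniformly continuous on a compact set containing the nearby
  attractors.\<close>

text \<open>\<open>hclose A C e\<close> is a real-valued, strict substitute for \<open>hausdist A C < e\<close>.\<close>
definition hclose :: "'a::metric_space set \<Rightarrow> 'a set \<Rightarrow> real \<Rightarrow> bool" where
  "hclose A C e \<longleftrightarrow> (\<forall>a\<in>A. \<exists>c\<in>C. dist a c < e) \<and> (\<forall>c\<in>C. \<exists>a\<in>A. dist a c < e)"

definition hcontinuous_at :: "('l::metric_space \<Rightarrow> 'a::metric_space set) \<Rightarrow> 'l \<Rightarrow> bool" where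
  "hcontinuous_at G l0 \<longleftrightarrow> (\<forall>e>0. \<exists>\<delta>>0. \<forall>m. dist m l0 < \<delta> \<longrightarrow> hclose (G m) (G l0) e)"

lemma hclose_sym: "hclose A C e \<Longrightarrow> hclose C A e"
  unfolding hclose_def by (metis dist_commute)

lemma hclose_mono: "hclose A C e \<Longrightarrow> e \<le> e' \<Longrightarrow> hclose A C e'"
  unfolding hclose_def by (meson less_le_trans)

lemma hclose_trans [trans]:
  assumes "hclose A B e1" and "hclose B C e2"
  shows "hclose A C (e1 + e2)"
proof -
  have "dist a c < e1 + e2" if "dist a b < e1" "dist b c < e2" for a b c :: 'a
    using that dist_triangle[of a c b] by linarith
  with assms show ?thesis unfolding hclose_def by (meson dist_commute)
qed

lemma hclose_image_pointwise:
  assumes "\<forall>x\<in>X. dist (f x) (g x) < e"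
  shows "hclose (f ` X) (g ` X) e"
  using assms unfolding hclose_def by auto

lemma hclose_image_uniformly_continuous:
  assumes "uniformly_continuous_on K g" and "e > 0"
  obtains \<eta> where "\<eta> > 0"
    and "\<And>X Y. X \<subseteq> K \<Longrightarrow> Y \<subseteq> K \<Longrightarrow> hclose X Y \<eta> \<Longrightarrow> hclose (g ` X) (g ` Y) e"
proof -
  obtain \<eta> where \<eta>: "\<eta> > 0" "\<And>x y. x \<in> K \<Longrightarrow> y \<in> K \<Longrightarrow> dist x y < \<eta> \<Longrightarrow> dist (g x) (g y) < e"
    using assms unfolding uniformly_continuous_on_def by metis
  have "hclose (g ` X) (g ` Y) e" if "X \<subseteq> K" "Y \<subseteq> K" "hclose X Y \<eta>" for X Y
    using that \<eta>(2) unfolding hclose_def by (fastforce simp: subset_iff)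
  with \<eta>(1) show thesis by (rule that)
qed

lemma hsemidist_le_if_approx:
  assumes "\<forall>a\<in>A. \<exists>c\<in>C. dist a c < e" and "0 \<le> e"
  shows "hsemidist A C \<le> ereal e"
  unfolding hsemidist_def
proof (rule Sup_least)
  fix x assume x: "x \<in> insert 0 ((\<lambda>a. Inf ((\<lambda>c. ereal (dist a c)) ` C)) ` A)"
  show "x \<le> ereal e"
  proof (cases "x = 0")
    case False
    then obtain a where a: "a \<in> A" "x = Inf ((\<lambda>c. ereal (dist a c)) ` C)" using x by auto
    then obtain c where "c \<in> C" "dist a c < e" using assms(1) by blast
    then show ?thesis using a by (metis INF_lower2 ereal_less_eq(3) less_imp_le)
  qed (simp add: assms(2))
qed

lemma hsemidist_less_imp_approx:
  assumes "hsemidist A C < ereal e" and "a \<in> A"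
  shows "\<exists>c\<in>C. dist a c < e"
proof -
  have "Inf ((\<lambda>c. ereal (dist a c)) ` C) \<le> hsemidist A C"
    unfolding hsemidist_def by (rule Sup_upper) (use assms(2) in auto)
  with assms(1) have "Inf ((\<lambda>c. ereal (dist a c)) ` C) < ereal e" by simp
  then show ?thesis by (auto simp: INF_less_iff)
qed

lemma hausdist_le_if_hclose: "hclose A C e \<Longrightarrow> 0 \<le> e \<Longrightarrow> hausdist A C \<le> ereal e"
  unfolding hausdist_def hclose_def
  by (metis (no_types, lifting) dist_commute hsemidist_le_if_approx max.bounded_iff)

lemma hausdist_nonneg: "0 \<le> hausdist A C"
  unfolding hausdist_def hsemidist_def by (simp add: Sup_upper le_max_iff_disj)

lemma tendsto_hausdist_if_hcontinuous_at:
  assumes "hcontinuous_at G l0"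
  shows "((\<lambda>m. hausdist (G m) (G l0)) \<longlongrightarrow> 0) (at l0)"
proof (rule order_tendstoI)
  fix a :: ereal assume "a < 0"
  then show "eventually (\<lambda>m. a < hausdist (G m) (G l0)) (at l0)"
    by (intro always_eventually allI less_le_trans[OF _ hausdist_nonneg])
next
  fix a :: ereal assume a: "0 < a"
  obtain e where "0 < ereal e" and e: "ereal e < a"
    using ereal_dense2[OF a] by blast
  then have "0 < e" by simp
  obtain d where "d > 0" and d: "\<And>m. dist m l0 < d \<Longrightarrow> hclose (G m) (G l0) e"
    using assms \<open>0 < e\<close> unfolding hcontinuous_at_def by blast
  have "hausdist (G m) (G l0) < a" if "dist m l0 < d" for m
    using hausdist_le_if_hclose[OF d[OF that]] \<open>0 < e\<close> e by simp
  with \<open>d > 0\<close> show "eventually (\<lambda>m. hausdist (G m) (G l0) < a) (at l0)"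
    unfolding eventually_at by blast
qed

lemma Baire_Union_interior_closed_cover:
  fixes F :: "nat \<Rightarrow> 'a::complete_space set"
  assumes closed: "\<And>N. closed (F N)" and cover: "(\<Union>N. F N) = UNIV"
  shows "interior (- (\<Union>N. interior (F N))) = {}"
proof -
  define C where "C = - (\<Union>N. interior (F N))"
  have "closed C" unfolding C_def by (auto intro!: open_Union)
  have "euclidean interior_of \<Union>(range (\<lambda>N. F N \<inter> C)) = {}"
  proof (rule Baire_category_alt)
    show "completely_metrizable_space (euclidean::'a topology) \<or>
          locally_compact_space (euclidean::'a topology) \<and> regular_space (euclidean::'a topology)"
      using completely_metrizable_space_euclidean by blast
    fix T assume "T \<in> range (\<lambda>N. F N \<inter> C)"
    then obtain N where T: "T = F N \<inter> C" by auto
    have "interior T \<subseteq> interior (F N) \<inter> C"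
      using T interior_subset by (auto simp: interior_Int)
    also have "\<dots> = {}" unfolding C_def by blast
    finally show "closedin euclidean T \<and> euclidean interior_of T = {}"
      using T closed \<open>closed C\<close> by (auto simp: euclidean_interior_of)
  qed simp
  moreover have "\<Union>(range (\<lambda>N. F N \<inter> C)) = C" using cover by auto
  ultimately show ?thesis unfolding C_def by (metis euclidean_interior_of)
qed

lemma residual_Inter_open_dense:
  fixes U :: "'i::countable \<Rightarrow> 'a::topological_space set"
  assumes "\<And>i. open (U i)" and "\<And>i. interior (- U i) = {}"
  shows "residual (\<Inter>i. U i)"
  unfolding residual_def
proof (intro exI conjI ballI)
  show "countable (range (\<lambda>i. - U i))" by simp
  show "- (\<Inter>i. U i) = \<Union>(range (\<lambda>i. - U i))" by auto
  fix N assume "N \<in> range (\<lambda>i. - U i)"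
  then show "nowhere_dense N"
    using assms unfolding nowhere_dense_def by (auto simp: closed_Compl closure_closed)
qed


lemma hclose_Cauchy_closure:
  fixes F :: "nat \<Rightarrow> 'l::metric_space \<Rightarrow> 'a::metric_space set"
  assumes cont: "\<And>n l. hcontinuous_at (F n) l" and "e > 0"
    and l: "l \<in> closure {l. \<forall>n\<ge>N. \<forall>n'\<ge>N. hclose (F n l) (F n' l) e}"
    and "n \<ge> N" "n' \<ge> N"
  shows "hclose (F n l) (F n' l) (2 * e)"
proof -
  have "e/2 > 0" using \<open>e > 0\<close> by simp
  then obtain d1 where "d1 > 0" and d1: "\<And>m. dist m l < d1 \<Longrightarrow> hclose (F n m) (F n l) (e/2)"
    using cont[of n l] unfolding hcontinuous_at_def by blast
  obtain d2 where "d2 > 0" and d2: "\<And>m. dist m l < d2 \<Longrightarrow> hclose (F n' m) (F n' l) (e/2)"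
    using cont[of n' l] \<open>e/2 > 0\<close> unfolding hcontinuous_at_def by blast
  from \<open>d1 > 0\<close> \<open>d2 > 0\<close> have "min d1 d2 > 0" by simp
  then obtain y where y: "\<forall>n\<ge>N. \<forall>n'\<ge>N. hclose (F n y) (F n' y) e" "dist y l < min d1 d2"
    using l unfolding closure_approachable by blast
  have "hclose (F n l) (F n y) (e/2)" using y(2) hclose_sym[OF d1[of y]] by simp
  also have "hclose (F n y) (F n' y) e" using y(1) \<open>n \<ge> N\<close> \<open>n' \<ge> N\<close> by blast
  also have "hclose (F n' y) (F n' l) (e/2)" using y(2) d2[of y] by simp
  finally show ?thesis by (rule hclose_mono) simp
qed

text \<open>The sets where \<open>F\<close> is \<open>\<epsilon>\<close>-Cauchy from index \<open>N\<close> on have closures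
  covering the space, so the union of their interiors is dense; near a point of such an
  interior every \<open>G m\<close> is within \<open>3\<epsilon>\<close> of \<open>F N m\<close>, and \<open>F N\<close> is continuous.\<close>
lemma hclose_limit_small_oscillation:
  fixes F :: "nat \<Rightarrow> 'l::complete_space \<Rightarrow> 'a::metric_space set" and G :: "'l \<Rightarrow> 'a set"
  assumes cont: "\<And>n l. hcontinuous_at (F n) l"
    and conv: "\<And>l e. e > 0 \<Longrightarrow> \<exists>N. \<forall>n\<ge>N. hclose (F n l) (G l) e"
    and "e > 0"
  shows "\<exists>U. open U \<and> interior (- U) = {} \<and>
           (\<forall>l0\<in>U. \<exists>\<delta>>0. \<forall>m. dist m l0 < \<delta> \<longrightarrow> hclose (G m) (G l0) e)"
proof -
  define \<epsilon> where "\<epsilon> = e / 7"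
  have "\<epsilon> > 0" using \<open>e > 0\<close> by (simp add: \<epsilon>_def)
  define E where "E N = {l. \<forall>n\<ge>N. \<forall>n'\<ge>N. hclose (F n l) (F n' l) \<epsilon>}" for N
  define U where "U = (\<Union>N. interior (closure (E N)))"
  have "l \<in> (\<Union>N. closure (E N))" for l
  proof -
    obtain N where N: "\<forall>n\<ge>N. hclose (F n l) (G l) (\<epsilon>/2)" using conv[of "\<epsilon>/2" l] \<open>\<epsilon> > 0\<close> by auto
    have "hclose (F n l) (F n' l) \<epsilon>" if "n \<ge> N" "n' \<ge> N" for n n'
      using hclose_trans[OF N[rule_format, OF that(1)] hclose_sym[OF N[rule_format, OF that(2)]]]
      by simp
    then have "l \<in> closure (E N)" unfolding E_def by (intro closure_subset[THEN subsetD]) blast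
    then show ?thesis by blast
  qed
  then have "(\<Union>N. closure (E N)) = UNIV" by blast
  then have "interior (- U) = {}"
    unfolding U_def by (intro Baire_Union_interior_closed_cover) simp_all
  moreover have "\<exists>\<delta>>0. \<forall>m. dist m l0 < \<delta> \<longrightarrow> hclose (G m) (G l0) e" if "l0 \<in> U" for l0
  proof -
    obtain N where "l0 \<in> interior (closure (E N))" using \<open>l0 \<in> U\<close> unfolding U_def by blast
    then obtain r where "r > 0" and r: "ball l0 r \<subseteq> closure (E N)" unfolding mem_interior by blast
    have near: "hclose (F N m) (G m) (3 * \<epsilon>)" if "m \<in> ball l0 r" for m
    proof -
      obtain N' where N': "\<forall>n\<ge>N'. hclose (F n m) (G m) \<epsilon>" using conv[OF \<open>\<epsilon> > 0\<close>] by blast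
      have "m \<in> closure (E N)" using r that by blast
      then have "hclose (F N m) (F (max N N') m) (2 * \<epsilon>)"
        unfolding E_def by (rule hclose_Cauchy_closure[OF cont \<open>\<epsilon> > 0\<close>]) simp_all
      also have "hclose (F (max N N') m) (G m) \<epsilon>" using N' by simp
      finally show ?thesis by (rule hclose_mono) simp
    qed
    obtain d where "d > 0" and d: "\<forall>m. dist m l0 < d \<longrightarrow> hclose (F N m) (F N l0) \<epsilon>"
      using cont[of N l0] \<open>\<epsilon> > 0\<close> unfolding hcontinuous_at_def by blast
    have "hclose (G m) (G l0) e" if m: "dist m l0 < min r d" for m
    proof -
      have "m \<in> ball l0 r" using m by (simp add: dist_commute)
      then have "hclose (G m) (F N m) (3 * \<epsilon>)" by (rule hclose_sym[OF near])
      also have "hclose (F N m) (F N l0) \<epsilon>" using d m by simp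
      also have "hclose (F N l0) (G l0) (3 * \<epsilon>)" using near \<open>r > 0\<close> by simp
      finally show ?thesis by (rule hclose_mono) (simp add: \<epsilon>_def)
    qed
    then show ?thesis using \<open>r > 0\<close> \<open>d > 0\<close> by (intro exI[of _ "min r d"]) auto
  qed
  moreover have "open U" unfolding U_def by auto
  ultimately show ?thesis by blast
qed

lemma residual_hcontinuous_at_limit:
  fixes F :: "'i::countable \<Rightarrow> nat \<Rightarrow> 'l::complete_space \<Rightarrow> 'a::metric_space set"
    and G :: "'i \<Rightarrow> 'l \<Rightarrow> 'a set"
  assumes cont: "\<And>i n l. hcontinuous_at (F i n) l"
    and conv: "\<And>i l e. e > 0 \<Longrightarrow> \<exists>N. \<forall>n\<ge>N. hclose (F i n l) (G i l) e"
  shows "\<exists>Ls. residual Ls \<and> (\<forall>i. \<forall>l\<in>Ls. hcontinuous_at (G i) l)"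
proof -
  have "\<forall>ik. \<exists>U. open U \<and> interior (- U) = {} \<and> (\<forall>l0\<in>U. \<exists>\<delta>>0. \<forall>m. dist m l0 < \<delta> \<longrightarrow>
          hclose (G (fst ik) m) (G (fst ik) l0) (1 / real (Suc (snd ik))))"
  proof
    fix ik :: "'i \<times> nat"
    show "\<exists>U. open U \<and> interior (- U) = {} \<and> (\<forall>l0\<in>U. \<exists>\<delta>>0. \<forall>m. dist m l0 < \<delta> \<longrightarrow>
          hclose (G (fst ik) m) (G (fst ik) l0) (1 / real (Suc (snd ik))))"
      by (rule hclose_limit_small_oscillation[OF cont conv]) simp_all
  qed
  from choice[OF this] obtain U :: "'i \<times> nat \<Rightarrow> 'l set"
    where U: "\<forall>ik. open (U ik) \<and> interior (- U ik) = {} \<and> (\<forall>l0\<in>U ik. \<exists>\<delta>>0. \<forall>m.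
       dist m l0 < \<delta> \<longrightarrow> hclose (G (fst ik) m) (G (fst ik) l0) (1 / real (Suc (snd ik))))" ..
  have "hcontinuous_at (G i) l" if l: "l \<in> (\<Inter>ik. U ik)" for i l
    unfolding hcontinuous_at_def
  proof (intro allI impI)
    fix e :: real assume "e > 0"
    then obtain k where k: "1 / real (Suc k) < e" using nat_approx_posE by blast
    have "l \<in> U (i, k)" using l by blast
    with U obtain \<delta> where "\<delta> > 0"
      and \<delta>: "\<And>m. dist m l < \<delta> \<Longrightarrow> hclose (G i m) (G i l) (1 / real (Suc k))"
      by (metis fst_conv snd_conv)
    have "hclose (G i m) (G i l) e" if "dist m l < \<delta>" for m
      using hclose_mono[OF \<delta>[OF that] less_imp_le[OF k]] .
    with \<open>\<delta> > 0\<close> show "\<exists>\<delta>>0. \<forall>m. dist m l < \<delta> \<longrightarrow> hclose (G i m) (G i l) e" by blast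
  qed
  moreover have "residual (\<Inter>ik. U ik)"
    using U by (intro residual_Inter_open_dense) blast+
  ultimately show ?thesis by blast
qed

lemma is_process_continuous_on:
  assumes "is_process S" and "s \<le> t"
  shows "continuous_on UNIV (S t s)"
proof -
  have "continuous_on {(x, t, s). s \<le> t} (\<lambda>(x, t, s). S t s x)"
    using assms(1) unfolding is_process_def by blast
  then have "continuous_on UNIV (\<lambda>x. (\<lambda>(x, t, s). S t s x) (x, t, s))"
    by (rule continuous_on_compose2) (auto intro!: continuous_intros simp: assms(2))
  then show ?thesis by simp
qed

text \<open>\<open>\<A>(t) \<subseteq> S(t, t - n) D\<close> by invariance, and pullback attraction of \<open>D\<close> gives the
  reverse approximation.\<close>
lemma pullback_attractor_hclose_image:
  assumes attr: "pullback_attractor S A" and "bounded D" and sub: "\<And>t. A t \<subseteq> D" and "e > 0"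
  shows "\<exists>N. \<forall>n\<ge>N. hclose (S t (t - real n) ` D) (A t) e"
proof -
  have "((\<lambda>s. hsemidist (S t s ` D) (A t)) \<longlongrightarrow> 0) at_bot"
    using attr \<open>bounded D\<close> unfolding pullback_attractor_def by blast
  from order_tendstoD(2)[OF this] have "eventually (\<lambda>s. hsemidist (S t s ` D) (A t) < ereal e) at_bot"
    using \<open>e > 0\<close> by simp
  then obtain b where b: "\<And>s. s \<le> b \<Longrightarrow> hsemidist (S t s ` D) (A t) < ereal e"
    unfolding eventually_at_bot_linorder by blast
  have "hclose (S t (t - real n) ` D) (A t) e" if "n \<ge> nat \<lceil>t - b\<rceil>" for n
  proof -
    have "t - real n \<le> b" using that by linarith
    then have approx: "\<forall>a\<in>S t (t - real n) ` D. \<exists>c\<in>A t. dist a c < e"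
      using b hsemidist_less_imp_approx by blast
    have "A t = S t (t - real n) ` A (t - real n)"
      using attr unfolding pullback_attractor_def by simp
    then have "A t \<subseteq> S t (t - real n) ` D" using sub by blast
    with approx \<open>e > 0\<close> show ?thesis unfolding hclose_def by force
  qed
  then show ?thesis by blast
qed

lemma hcontinuous_at_image_uniform:
  assumes "\<And>e. e > 0 \<Longrightarrow> \<exists>\<delta>>0. \<forall>m. dist m l0 < \<delta> \<longrightarrow> (\<forall>x\<in>D. dist (f m x) (f l0 x) < e)"
  shows "hcontinuous_at (\<lambda>m. f m ` D) l0"
  using assms hclose_image_pointwise unfolding hcontinuous_at_def by metis

text \<open>\<open>\<A>\<^sub>\<mu>(t) = S\<^sub>\<mu>(t, q) \<A>\<^sub>\<mu>(q)\<close> is close to \<open>S\<^sub>\<lambda>(t, q) \<A>\<^sub>\<mu>(q)\<close> by uniform dependence on the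
  parameter, and that is close to \<open>S\<^sub>\<lambda>(t, q) \<A>\<^sub>\<lambda>(q)\<close> by uniform continuity of
  \<open>S\<^sub>\<lambda>(t, q)\<close> on the compact set \<open>K\<close>.\<close>
lemma hcontinuous_at_attractor_forward:
  assumes proc: "is_process (S l0)" and inv: "\<And>l. A l t = S l t q ` A l q"
    and "q \<le> t" and sub: "\<And>l. A l q \<subseteq> D"
    and unif: "\<And>e. e > 0 \<Longrightarrow> \<exists>\<delta>>0. \<forall>m. dist m l0 < \<delta> \<longrightarrow>
                     (\<forall>x\<in>D. dist (S m t q x) (S l0 t q x) < e)"
    and "compact K" and "r > 0" and K: "\<And>m. m \<in> ball l0 r \<Longrightarrow> A m q \<subseteq> K"
    and cont_q: "hcontinuous_at (\<lambda>m. A m q) l0"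
  shows "hcontinuous_at (\<lambda>m. A m t) l0"
  unfolding hcontinuous_at_def
proof (intro allI impI)
  fix e :: real assume "e > 0"
  have "uniformly_continuous_on K (S l0 t q)"
    using compact_uniformly_continuous
      [OF continuous_on_subset[OF is_process_continuous_on[OF proc \<open>q \<le> t\<close>] subset_UNIV] \<open>compact K\<close>] .
  then obtain \<eta> where "\<eta> > 0" and \<eta>: "\<And>X Y. X \<subseteq> K \<Longrightarrow> Y \<subseteq> K \<Longrightarrow> hclose X Y \<eta> \<Longrightarrow>
      hclose (S l0 t q ` X) (S l0 t q ` Y) (e/2)"
    by (rule hclose_image_uniformly_continuous[where e = "e/2"]) (use \<open>e > 0\<close> in auto)
  obtain d1 where "d1 > 0" and d1: "\<forall>m. dist m l0 < d1 \<longrightarrow> hclose (A m q) (A l0 q) \<eta>"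
    using cont_q \<open>\<eta> > 0\<close> unfolding hcontinuous_at_def by blast
  obtain d2 where "d2 > 0" and d2: "\<forall>m. dist m l0 < d2 \<longrightarrow> (\<forall>x\<in>D. dist (S m t q x) (S l0 t q x) < e/2)"
    using unif[OF half_gt_zero[OF \<open>e > 0\<close>]] by blast
  have "hclose (A m t) (A l0 t) e" if m: "dist m l0 < min r (min d1 d2)" for m
  proof -
    have "hclose (S m t q ` A m q) (S l0 t q ` A m q) (e/2)"
      by (rule hclose_image_pointwise) (use d2 m sub[of m] in auto)
    also have "hclose (S l0 t q ` A m q) (S l0 t q ` A l0 q) (e/2)"
      by (rule \<eta>) (use K d1 m \<open>r > 0\<close> in \<open>auto simp: dist_commute\<close>)
    finally show ?thesis unfolding inv by (rule hclose_mono) simp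
  qed
  then show "\<exists>\<delta>>0. \<forall>m. dist m l0 < \<delta> \<longrightarrow> hclose (A m t) (A l0 t) e"
    using \<open>r > 0\<close> \<open>d1 > 0\<close> \<open>d2 > 0\<close> by (intro exI[of _ "min r (min d1 d2)"]) auto
qed

lemma compact_closure_subset:
  fixes X :: "'a::metric_space set"
  assumes "compact D" and "X \<subseteq> D"
  shows "compact (closure X)"
proof -
  have "closure X \<subseteq> D"
    using assms by (intro closure_minimal compact_imp_closed)
  then show ?thesis
    using compact_Int_closed[OF \<open>compact D\<close> closed_closure, of X] by (simp add: Int_absorb1)
qed

lemma residual_hcontinuous_at_attractors:
  fixes S :: "'l::complete_space \<Rightarrow> real \<Rightarrow> real \<Rightarrow> 'a::complete_space \<Rightarrow> 'a"
    and A :: "'l \<Rightarrow> real \<Rightarrow> 'a set"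
  assumes proc: "\<And>l. is_process (S l)"
    and L1: "\<And>l. pullback_attractor (S l) (A l)"
    and "bounded D" and sub: "\<And>l t. A l t \<subseteq> D"
    and unif: "\<And>s t l0 e. s \<le> t \<Longrightarrow> e > 0 \<Longrightarrow> \<exists>\<delta>>0. \<forall>m. dist m l0 < \<delta> \<longrightarrow>
                     (\<forall>x\<in>D. dist (S m t s x) (S l0 t s x) < e)"
    and cpt: "\<And>l0 t. \<exists>r>0. compact (closure (\<Union>m\<in>ball l0 r. A m t))"
  shows "\<exists>Ls. residual Ls \<and> (\<forall>t. \<forall>l0\<in>Ls. hcontinuous_at (\<lambda>m. A m t) l0)"
proof -
  have "\<exists>Ls. residual Ls \<and> (\<forall>z::int. \<forall>l0\<in>Ls. hcontinuous_at (\<lambda>m. A m (real_of_int z)) l0)"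
  proof (rule residual_hcontinuous_at_limit
      [of "\<lambda>z n m. S m (real_of_int z) (real_of_int z - real n) ` D" "\<lambda>z m. A m (real_of_int z)"])
    show "hcontinuous_at (\<lambda>m. S m (real_of_int z) (real_of_int z - real n) ` D) l" for z n l
      by (rule hcontinuous_at_image_uniform, rule unif) simp_all
    show "\<exists>N. \<forall>n\<ge>N. hclose (S l (real_of_int z) (real_of_int z - real n) ` D) (A l (real_of_int z)) e"
      if "e > 0" for z l e
      by (rule pullback_attractor_hclose_image[OF L1 \<open>bounded D\<close> sub that])
  qed
  then obtain Ls where "residual Ls"
    and int_times: "\<And>z l0. l0 \<in> Ls \<Longrightarrow> hcontinuous_at (\<lambda>m. A m (real_of_int z)) l0"
    by blast
  have "hcontinuous_at (\<lambda>m. A m t) l0" if "l0 \<in> Ls" for t l0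
  proof -
    have "real_of_int \<lfloor>t\<rfloor> \<le> t" by simp
    then have inv: "A l t = S l t \<lfloor>t\<rfloor> ` A l \<lfloor>t\<rfloor>" for l
      using L1[of l] unfolding pullback_attractor_def by simp
    obtain r where "r > 0" and cpt_r: "compact (closure (\<Union>m\<in>ball l0 r. A m \<lfloor>t\<rfloor>))"
      using cpt by blast
    have K: "A m \<lfloor>t\<rfloor> \<subseteq> closure (\<Union>m\<in>ball l0 r. A m \<lfloor>t\<rfloor>)" if "m \<in> ball l0 r" for m
      using that by (intro subset_trans[OF _ closure_subset]) blast
    show ?thesis
      by (rule hcontinuous_at_attractor_forward[OF proc inv \<open>real_of_int \<lfloor>t\<rfloor> \<le> t\<close> sub
            unif[OF \<open>real_of_int \<lfloor>t\<rfloor> \<le> t\<close>] cpt_r \<open>r > 0\<close> K int_times[OF that]])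
  qed
  with \<open>residual Ls\<close> show ?thesis by blast
qed

theorem theorem3p3:
  fixes S :: "'l::complete_space \<Rightarrow> real \<Rightarrow> real \<Rightarrow> 'a::complete_space \<Rightarrow> 'a"
    and A :: "'l \<Rightarrow> real \<Rightarrow> 'a set"
  assumes proc: "\<And>l. is_process (S l)"
    and L1: "\<And>l. pullback_attractor (S l) (A l)"
    and hyp: "(\<exists>D. compact D \<and> (\<forall>l t. A l t \<subseteq> D) \<and>
               (\<forall>s t K l0 \<epsilon>. s \<le> t \<and> compact K \<and> \<epsilon> > 0 \<longrightarrow>
                  (\<exists>\<delta>>0. \<forall>m. dist m l0 < \<delta> \<longrightarrow>
                     (\<forall>x\<in>K. dist (S m t s x) (S l0 t s x) < \<epsilon>))))
            \<or> (\<exists>D. bounded D \<and> (\<forall>l t. A l t \<subseteq> D) \<and>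
               (\<forall>s t K l0 \<epsilon>. s \<le> t \<and> bounded K \<and> \<epsilon> > 0 \<longrightarrow>
                  (\<exists>\<delta>>0. \<forall>m. dist m l0 < \<delta> \<longrightarrow>
                     (\<forall>x\<in>K. dist (S m t s x) (S l0 t s x) < \<epsilon>))) \<and>
               (\<forall>l0 t. \<exists>\<delta>>0. compact (closure (\<Union>m\<in>ball l0 \<delta>. A m t))))"
  shows "\<exists>Ls. residual Ls \<and>
           (\<forall>t. \<forall>l0\<in>Ls. ((\<lambda>m. hausdist (A m t) (A l0 t)) \<longlongrightarrow> 0) (at l0))"
proof -
  obtain D where "bounded D" and "\<And>l t. A l t \<subseteq> D"
    and "\<And>s t l0 e. s \<le> t \<Longrightarrow> e > 0 \<Longrightarrow> \<exists>\<delta>>0. \<forall>m. dist m l0 < \<delta> \<longrightarrow>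
           (\<forall>x\<in>D. dist (S m t s x) (S l0 t s x) < e)"
    and "\<And>l0 t. \<exists>r>0. compact (closure (\<Union>m\<in>ball l0 r. A m t))"
    using hyp
  proof (elim disjE exE conjE)
    fix D assume D: "compact D" "\<forall>l t. A l t \<subseteq> D"
      "\<forall>s t K l0 \<epsilon>. s \<le> t \<and> compact K \<and> \<epsilon> > 0 \<longrightarrow> (\<exists>\<delta>>0. \<forall>m. dist m l0 < \<delta> \<longrightarrow>
         (\<forall>x\<in>K. dist (S m t s x) (S l0 t s x) < \<epsilon>))"
    have "compact (closure (\<Union>m\<in>ball l0 1. A m t))" for l0 t
      by (rule compact_closure_subset[OF D(1)]) (use D(2) in blast)
    then have "\<exists>r>0. compact (closure (\<Union>m\<in>ball l0 r. A m t))" for l0 t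
      using zero_less_one by blast
    then show thesis by (intro that[of D]) (use D in \<open>simp_all add: compact_imp_bounded\<close>)
  qed (use that in simp)
  then have "\<exists>Ls. residual Ls \<and> (\<forall>t. \<forall>l0\<in>Ls. hcontinuous_at (\<lambda>m. A m t) l0)"
    by (rule residual_hcontinuous_at_attractors[OF proc L1])
  then show ?thesis using tendsto_hausdist_if_hcontinuous_at by blast
qed

end
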